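(* For $c\in\{1,2,4,5,7\}$ there is no set $C\subset V(\tfrac12 H_{24})$ whose characteristic function $\chi_C$ is a perfect coloring of $\tfrac12 H_{24}$ with parameters $((20+c,\,256-c)(c,\,276-c))$.
   Context: $E^n$ is the set of binary words of length $n$; the (Hamming) distance between two words is the number of positions where they differ, and the weight of a word is its number of ones. The halved $24$-cube $\tfrac12 H_{24}$ is the graph whose vertices are the even-weight words of $E^{24}$, two of them adjacent iff they are at Hamming distance exactly $2$ (it is regular of degree $276$). For a graph $G$ and a set $C$ with $\emptyset\neq C\subsetneq V(G)$, the characteristic function $\chi_C$ is a perfect coloring with parameters $((a,b)(c,d))$ if every vertex of $C$ has exactly $a$ neighbours in $C$ and exactly $b$ neighbours outside $C$, and every vertex outside $C$ has exactly $c$ neighbours in $C$ and exactly $d$ neighbours outside $C$. *)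

theory Defs
  imports Main
begin

text \<open>Binary words of length n are represented as subsets of {0..<n} (the support,
  i.e. the set of positions holding a one).\<close>

definition words :: "nat \<Rightarrow> nat set set" where
  "words n = Pow {..<n}"

definition weight :: "nat set \<Rightarrow> nat" where
  "weight x = card x"

definition hamming_dist :: "nat set \<Rightarrow> nat set \<Rightarrow> nat" where
  "hamming_dist x y = card ((x - y) \<union> (y - x))"

definition halved_cube_vertices :: "nat \<Rightarrow> nat set set" where
  "halved_cube_vertices n = {x \<in> words n. even (weight x)}"

definition halved_cube_adj :: "nat set \<Rightarrow> nat set \<Rightarrow> bool" where
  "halved_cube_adj x y \<longleftrightarrow> hamming_dist x y = 2"

definition perfect_coloring ::
  "'v set \<Rightarrow> ('v \<Rightarrow> 'v \<Rightarrow> bool) \<Rightarrow> 'v set \<Rightarrow> nat \<Rightarrow> nat \<Rightarrow> nat \<Rightarrow> nat \<Rightarrow> bool" where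
  "perfect_coloring V adj C a b c d \<longleftrightarrow>
     C \<noteq> {} \<and> C \<subset> V \<and>
     (\<forall>x\<in>C. card {y \<in> C. adj x y} = a \<and> card {y \<in> V - C. adj x y} = b) \<and>
     (\<forall>x\<in>V - C. card {y \<in> C. adj x y} = c \<and> card {y \<in> V - C. adj x y} = d)"

end

theory Submission
  imports Defs
begin

(*
  For x in C, the local graph of x joins the coordinates i and j iff flip x {i,j} is in C.
  Its degree sum is 2(20+c), and a non-edge ij gives 1 + deg i + deg j <= c, because
  flip x {i,j} lies outside C and sees x and all flip x {i,k}, flip x {j,k} in C.
  A vertex of degree 23 is a centre of x.

  1. A counting lemma for graphs on {0..<n} (max_degree_bound) shows that x has a centre
     when c <= 5, and that for c = 7 a word without centre has all local degrees <= 4.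
  2. For c = 7 the latter is refuted by studying the odd word z = flip x {i}: the words
     of C at distance 3 from z are counted in two ways and compared, via a Bonferroni
     inequality, with the shells through the neighbours of i (no_degree_3,
     no_two_degree_4_neighbours).
  3. A centre forces degree sum at least 46, so c >= 3; for c <= 7 it is unique, and the
     words of C sharing the odd core flip x {centre} come in classes of 24.  Thus
     24 divides |C|, while double counting gives |C| * 256 = c * 2^23, so 3 divides c,
     which excludes c in {4, 5, 7}.
*)


definition flip :: "nat set \<Rightarrow> nat set \<Rightarrow> nat set" where
  "flip x S = sym_diff x S"

lemma flip_flip [simp]: "flip (flip x S) S = x"
  by (auto simp: flip_def)

lemma flip_flip_left [simp]: "flip x (flip x S) = S"
  by (auto simp: flip_def)

lemma flip_eq_iff: "flip x A = flip x B \<longleftrightarrow> A = B"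
  by (metis flip_flip_left)

lemma flip_solve: "flip z u = D \<Longrightarrow> u = flip z D"
  by auto

lemma flip_eq_self: "flip x S = x \<longleftrightarrow> S = {}" "x = flip x S \<longleftrightarrow> S = {}"
  by (auto simp: flip_def)

lemma flip_assoc: "flip (flip z A) B = flip A (flip z B)"
  by (auto simp: flip_def)

lemma flip_pair_singles: "a \<noteq> k \<Longrightarrow> flip (flip z {a}) (flip z {k}) = {a, k}"
  by (auto simp: flip_def)

lemma inj_on_flip_pair: "inj_on (\<lambda>k. flip x {i, k}) K"
  by (rule inj_onI) (auto simp: flip_eq_iff doubleton_eq_iff)

lemma inj_on_flip_single: "inj_on (\<lambda>k. flip z {k}) K"
  by (rule inj_onI) (simp add: flip_eq_iff)

lemma flip_subset: "x \<subseteq> {..<n} \<Longrightarrow> S \<subseteq> {..<n} \<Longrightarrow> flip x S \<subseteq> {..<n}"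
  by (auto simp: flip_def)

lemma hamming_dist_flip: "hamming_dist x y = card (flip x y)"
  by (simp add: hamming_dist_def flip_def)

lemma card_flip:
  assumes "finite x" "finite S"
  shows "card (flip x S) + 2 * card (x \<inter> S) = card x + card S"
proof -
  have "card (flip x S) = card (x - S) + card (S - x)"
    unfolding flip_def using assms by (simp add: card_Un_disjoint Diff_Int_distrib2)
  moreover have "card x = card (x \<inter> S) + card (x - S)" "card S = card (S \<inter> x) + card (S - x)"
    using assms by (simp_all add: card_Int_Diff)
  ultimately show ?thesis by (simp add: Int_commute)
qed

lemma even_card_flip:
  assumes "finite x" "finite S"
  shows "even (card (flip x S)) \<longleftrightarrow> (even (card x) \<longleftrightarrow> even (card S))"
  using card_flip[OF assms] by presburger

lemma halved_cube_vertices_iff: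
  "x \<in> halved_cube_vertices n \<longleftrightarrow> x \<subseteq> {..<n} \<and> even (card x)"
  by (simp add: halved_cube_vertices_def words_def weight_def)

lemma finite_halved_cube_vertices: "finite (halved_cube_vertices n)"
  by (rule finite_subset[of _ "Pow {..<n}"]) (auto simp: halved_cube_vertices_iff)

lemma halved_cube_adj_iff: "halved_cube_adj x y \<longleftrightarrow> card (flip x y) = 2"
  by (simp add: halved_cube_adj_def hamming_dist_flip)

lemma halved_cube_adj_sym: "halved_cube_adj x y = halved_cube_adj y x"
  by (simp add: halved_cube_adj_def hamming_dist_def Un_commute)

lemma halved_cube_adj_pair: "i \<noteq> j \<Longrightarrow> halved_cube_adj x (flip x {i, j})"
  by (simp add: halved_cube_adj_iff)

lemma halved_cube_adj_cases:
  assumes "x \<in> halved_cube_vertices n" "y \<in> halved_cube_vertices n" "halved_cube_adj x y"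
  obtains i j where "i \<noteq> j" "i < n" "j < n" "y = flip x {i, j}"
proof -
  have "card (flip x y) = 2" using assms(3) by (simp add: halved_cube_adj_iff)
  then obtain i j where ij: "i \<noteq> j" "flip x y = {i, j}" by (auto simp: card_2_iff)
  moreover have "flip x y \<subseteq> {..<n}"
    using assms(1,2) by (intro flip_subset) (auto simp: halved_cube_vertices_iff)
  ultimately show ?thesis using that by (metis flip_flip_left insert_subset lessThan_iff)
qed

lemma flip_in_halved_cube:
  assumes "x \<subseteq> {..<n}" "S \<subseteq> {..<n}" "even (card x) \<longleftrightarrow> even (card S)"
  shows "flip x S \<in> halved_cube_vertices n"
proof -
  have "finite x" "finite S" using assms(1,2) finite_subset by blast+
  then show ?thesis
    using assms by (simp add: halved_cube_vertices_iff flip_subset even_card_flip)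
qed

lemma flip_odd_in_halved_cube:
  assumes "z \<subseteq> {..<n}" "odd (card z)" "k < n"
  shows "flip z {k} \<in> halved_cube_vertices n"
  using assms by (intro flip_in_halved_cube) auto

text \<open>The halved n-cube has half of the 2^n words as vertices: flipping
  coordinate 0 exchanges even and odd words.\<close>

lemma card_halved_cube_vertices:
  assumes "0 < n"
  shows "card (halved_cube_vertices n) = 2 ^ (n - 1)"
proof -
  let ?E = "halved_cube_vertices n"
  let ?O = "{x. x \<subseteq> {..<n} \<and> odd (card x)}"
  have parity: "even (card (flip x {0})) \<longleftrightarrow> odd (card x)" if "x \<subseteq> {..<n}" for x
    using that by (simp add: even_card_flip finite_subset[OF _ finite_lessThan])
  have sub0: "k < n" if "x \<subseteq> {..<n}" "k \<in> flip x {0}" for x k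
    using that assms by (auto simp: flip_def)
  have "bij_betw (\<lambda>x. flip x {0}) ?E ?O"
  proof (rule bij_betw_byWitness[where f' = "\<lambda>x. flip x {0}"])
    show "(\<lambda>x. flip x {0}) ` ?E \<subseteq> ?O" "(\<lambda>x. flip x {0}) ` ?O \<subseteq> ?E"
      using parity sub0 by (auto simp: halved_cube_vertices_iff)
  qed auto
  then have "card ?E = card ?O" by (rule bij_betw_same_card)
  moreover have "card ?E + card ?O = 2 ^ n"
  proof -
    have split: "Pow {..<n} = ?E \<union> ?O" "?E \<inter> ?O = {}"
      by (auto simp: halved_cube_vertices_iff)
    have "finite ?O"
      by (rule finite_subset[of _ "Pow {..<n}"]) auto
    then have "card (Pow {..<n}) = card ?E + card ?O"
      unfolding split(1) using split(2) finite_halved_cube_vertices by (simp add: card_Un_disjoint)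
    then show ?thesis by (simp add: card_Pow)
  qed
  moreover have "2 ^ n = 2 * (2 :: nat) ^ (n - 1)"
    using assms by (metis Suc_diff_1 power_Suc)
  ultimately show ?thesis by simp
qed

lemma adj_flip_single_iff:
  assumes "finite (flip z u)"
  shows "halved_cube_adj (flip z {k}) u \<longleftrightarrow>
    (k \<in> flip z u \<and> card (flip z u) = 3) \<or> (k \<notin> flip z u \<and> card (flip z u) = 1)"
proof -
  let ?D = "flip z u"
  have "card (flip {k} ?D) + 2 * card ({k} \<inter> ?D) = 1 + card ?D"
    using card_flip[of "{k}" ?D] assms by simp
  moreover have "halved_cube_adj (flip z {k}) u \<longleftrightarrow> card (flip {k} ?D) = 2"
    by (simp add: halved_cube_adj_iff flip_assoc)
  ultimately show ?thesis by (cases "k \<in> ?D") auto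
qed

lemma card_adjacent_single_flips:
  assumes "z \<subseteq> {..<n}" "u \<subseteq> {..<n}"
  shows "card {k \<in> {..<n}. halved_cube_adj (flip z {k}) u} =
    (if card (flip z u) = 1 then n - 1 else if card (flip z u) = 3 then 3 else 0)"
proof -
  let ?D = "flip z u"
  have D: "?D \<subseteq> {..<n}" using assms by (rule flip_subset)
  then have "finite ?D" by (rule finite_subset[OF _ finite_lessThan])
  have "{k \<in> {..<n}. halved_cube_adj (flip z {k}) u} =
    (if card ?D = 1 then {..<n} - ?D else if card ?D = 3 then ?D else {})"
    using D \<open>finite ?D\<close> by (auto simp: adj_flip_single_iff)
  then show ?thesis using D \<open>finite ?D\<close> by (simp add: card_Diff_subset)
qed

lemma card_3_containing_pair:
  assumes "card D = 3" "a \<in> D" "b \<in> D" "a \<noteq> b"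
  obtains m where "m \<notin> {a, b}" "D = {a, b, m}"
proof -
  have "finite D" using assms(1) by (metis card.infinite zero_neq_numeral)
  then have "card (D - {a, b}) = 1" using assms by (simp add: card_Diff_subset)
  then obtain m where "D - {a, b} = {m}" by (auto simp: card_1_singleton_iff)
  then show ?thesis using that assms(2,3) by blast
qed

fun pairwise_overlap :: "'a set list \<Rightarrow> nat" where
  "pairwise_overlap [] = 0"
| "pairwise_overlap (B # Bs) = (\<Sum>X\<leftarrow>Bs. card (B \<inter> X)) + pairwise_overlap Bs"

lemma card_Int_Union_le:
  assumes "\<forall>X\<in>set Bs. finite X"
  shows "card (B \<inter> \<Union>(set Bs)) \<le> (\<Sum>X\<leftarrow>Bs. card (B \<inter> X))"
  using assms
proof (induction Bs)
  case (Cons X Bs)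
  have "card (B \<inter> \<Union>(set (X # Bs))) \<le> card (B \<inter> X) + card (B \<inter> \<Union>(set Bs))"
    by (metis Int_Un_distrib card_Un_le Union_insert list.set(2))
  then show ?case using Cons by simp
qed simp

lemma bonferroni:
  assumes "\<forall>X\<in>set Bs. finite X"
  shows "(\<Sum>X\<leftarrow>Bs. card X) \<le> card (\<Union>(set Bs)) + pairwise_overlap Bs"
  using assms
proof (induction Bs)
  case (Cons B Bs)
  have fin: "finite B" "finite (\<Union>(set Bs))" using Cons.prems by auto
  have "card B + card (\<Union>(set Bs)) = card (B \<union> \<Union>(set Bs)) + card (B \<inter> \<Union>(set Bs))"
    using card_Un_Int[OF fin] .
  moreover have "card (B \<inter> \<Union>(set Bs)) \<le> (\<Sum>X\<leftarrow>Bs. card (B \<inter> X))"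
    using card_Int_Union_le Cons.prems by auto
  ultimately show ?case using Cons by simp
qed simp

definition graph_deg :: "(nat \<Rightarrow> nat \<Rightarrow> bool) \<Rightarrow> nat \<Rightarrow> nat \<Rightarrow> nat" where
  "graph_deg E n i = card {j. j < n \<and> j \<noteq> i \<and> E i j}"

lemma graph_deg_le:
  assumes "i < n" shows "graph_deg E n i \<le> n - 1"
proof -
  have "{j. j < n \<and> j \<noteq> i \<and> E i j} \<subseteq> {..<n} - {i}" by auto
  then have "graph_deg E n i \<le> card ({..<n} - {i})"
    unfolding graph_deg_def by (intro card_mono) auto
  also have "\<dots> = n - 1" using assms by simp
  finally show ?thesis .
qed

lemma full_vertex_adj:
  assumes "graph_deg E n v = n - 1" "v < n" "j < n" "j \<noteq> v"
  shows "E v j"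
proof -
  have sub: "{j. j < n \<and> j \<noteq> v \<and> E v j} \<subseteq> {..<n} - {v}" by auto
  have "card {j. j < n \<and> j \<noteq> v \<and> E v j} = card ({..<n} - {v})"
    using assms(1,2) by (simp add: graph_deg_def)
  then have "{j. j < n \<and> j \<noteq> v \<and> E v j} = {..<n} - {v}"
    using sub by (intro card_subset_eq) auto
  then show ?thesis using assms(3,4) by blast
qed

text \<open>Every vertex is adjacent to all full vertices (those of degree n - 1), which
  gives a lower bound for the degree sum in terms of the number of full vertices.\<close>

lemma graph_deg_ge:
  assumes sym: "\<And>i j. E i j = E j i" and "i < n" and F: "F \<subseteq> {..<n} - {i}"
    and full: "\<And>v. v \<in> F \<Longrightarrow> graph_deg E n v = n - 1"
  shows "card F \<le> graph_deg E n i"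
  unfolding graph_deg_def
proof (rule card_mono)
  show "F \<subseteq> {j. j < n \<and> j \<noteq> i \<and> E i j}"
    using F full full_vertex_adj[of E n _ i] assms(2) sym by blast
qed simp

lemma degree_sum_full_vertices:
  assumes sym: "\<And>i j. E i j = E j i" and F: "F \<subseteq> {..<n}"
    and full: "\<And>v. v \<in> F \<Longrightarrow> graph_deg E n v = n - 1"
  shows "card F * (n - 1) + (n - card F) * card F \<le> (\<Sum>i<n. graph_deg E n i)"
proof -
  have finF: "finite F" using F finite_subset by blast
  have "(\<Sum>i<n. graph_deg E n i) = (\<Sum>i\<in>F. graph_deg E n i) + (\<Sum>i\<in>{..<n} - F. graph_deg E n i)"
    using F by (metis finite_lessThan sum.subset_diff add.commute)
  moreover have "(\<Sum>i\<in>F. graph_deg E n i) = card F * (n - 1)" using full by simp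
  moreover have "(\<Sum>i\<in>{..<n} - F. card F) \<le> (\<Sum>i\<in>{..<n} - F. graph_deg E n i)"
  proof (rule sum_mono)
    fix i assume i: "i \<in> {..<n} - F"
    then show "card F \<le> graph_deg E n i"
      using graph_deg_ge[of E i n F, OF sym] F full by auto
  qed
  moreover have "card ({..<n} - F) = n - card F" using F finF by (simp add: card_Diff_subset)
  ultimately show ?thesis by simp
qed

text \<open>If every non-adjacent pair satisfies 1 + deg i + deg j \<le> c and no vertex is
  full, then bounding the degrees of the neighbours of a vertex of maximum degree M by M
  and of its non-neighbours by c - 1 - M bounds the degree sum.\<close>

lemma max_degree_bound:
  assumes sym: "\<And>i j. E i j = E j i"
    and nonadj: "\<And>i j. i < n \<Longrightarrow> j < n \<Longrightarrow> i \<noteq> j \<Longrightarrow> \<not> E i j \<Longrightarrow>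
                   1 + graph_deg E n i + graph_deg E n j \<le> c"
    and no_full: "\<And>v. v < n \<Longrightarrow> graph_deg E n v \<noteq> n - 1"
    and n: "0 < n"
  obtains M where "\<And>v. v < n \<Longrightarrow> graph_deg E n v \<le> M" and "1 + M \<le> c"
    and "(\<Sum>i<n. graph_deg E n i) \<le> M + M * M + (n - 1 - M) * (c - 1 - M)"
proof -
  let ?d = "graph_deg E n"
  obtain v where v: "v < n" and vmax: "\<And>u. u < n \<Longrightarrow> ?d u \<le> ?d v"
  proof -
    have "\<forall>u. u < n \<longrightarrow> ?d u < n" using graph_deg_le[of _ n E] n by fastforce
    then show ?thesis using ex_has_greatest_nat[of "\<lambda>u. u < n" 0 ?d n] n that by blast
  qed
  define M where "M = ?d v"
  define Nb where "Nb = {j. j < n \<and> j \<noteq> v \<and> E v j}"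
  define Non where "Non = {j. j < n \<and> j \<noteq> v \<and> \<not> E v j}"
  have cardNb: "card Nb = M" by (simp add: Nb_def M_def graph_deg_def)
  have part: "{..<n} = insert v (Nb \<union> Non)" and disj: "Nb \<inter> Non = {}" "v \<notin> Nb \<union> Non"
    using v by (auto simp: Nb_def Non_def)
  have fin: "finite Nb" "finite Non" by (auto simp: Nb_def Non_def)
  have cardNon: "card Non = n - 1 - M"
  proof -
    have "n = Suc (card Nb + card Non)"
      using arg_cong[OF part, of card] disj fin by (simp add: card_Un_disjoint)
    then show ?thesis using cardNb by simp
  qed
  have "Non \<noteq> {}"
  proof
    assume "Non = {}"
    then have "Nb = {..<n} - {v}" using part disj by auto
    then show False using no_full[OF v] v by (simp add: cardNb[unfolded M_def, symmetric])
  qed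
  then obtain w where w: "w \<in> Non" by blast
  have Non_bound: "?d i \<le> c - 1 - M" "1 + M \<le> c" if "i \<in> Non" for i
    using nonadj[OF v, of i] that by (auto simp: Non_def M_def)
  show ?thesis
  proof
    show "\<And>u. u < n \<Longrightarrow> ?d u \<le> M" using vmax by (simp add: M_def)
    show "1 + M \<le> c" using Non_bound(2)[OF w] .
    have "(\<Sum>i<n. ?d i) = M + (\<Sum>i\<in>Nb. ?d i) + (\<Sum>i\<in>Non. ?d i)"
      using disj fin by (simp add: part sum.union_disjoint M_def)
    also have "\<dots> \<le> M + card Nb * M + card Non * (c - 1 - M)"
      using sum_bounded_above[of Nb ?d M] sum_bounded_above[of Non ?d "c - 1 - M"] vmax Non_bound(1)
      by (intro add_mono) (auto simp: Nb_def M_def)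
    finally show "(\<Sum>i<n. ?d i) \<le> M + M * M + (n - 1 - M) * (c - 1 - M)"
      by (simp add: cardNb cardNon)
  qed
qed

lemma perfect_coloring_double_count:
  assumes pc: "perfect_coloring V adj C a b c d" and "finite V"
    and sym: "\<And>x y. adj x y = adj y x"
  shows "card C * b = card (V - C) * c"
proof -
  have C: "C \<subseteq> V" "finite C" using pc \<open>finite V\<close> by (auto simp: perfect_coloring_def finite_subset)
  have "(\<Sum>x\<in>C. card {y \<in> V - C. adj x y}) = (\<Sum>y\<in>V - C. card {x \<in> C. adj x y})"
    using C \<open>finite V\<close> by (intro sum_multicount_gen) auto
  moreover have "(\<Sum>x\<in>C. card {y \<in> V - C. adj x y}) = card C * b"
    using pc by (simp add: perfect_coloring_def)
  moreover have "(\<Sum>y\<in>V - C. card {x \<in> C. adj x y}) = card (V - C) * c"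
    using pc by (simp add: perfect_coloring_def sym[of _ "_ :: 'a"])
  ultimately show ?thesis by simp
qed

abbreviation V24 :: "nat set set" where
  "V24 \<equiv> halved_cube_vertices 24"

locale coloring24 =
  fixes C :: "nat set set" and c :: nat
  assumes coloring: "perfect_coloring V24 halved_cube_adj C (20 + c) (256 - c) c (276 - c)"
begin

lemma C_subset: "C \<subseteq> V24"
  using coloring by (auto simp: perfect_coloring_def)

lemma C_nonempty: "C \<noteq> {}"
  using coloring by (simp add: perfect_coloring_def)

lemma finite_C: "finite C"
  using C_subset finite_halved_cube_vertices finite_subset by blast

lemma C_word: "u \<in> C \<Longrightarrow> u \<subseteq> {..<24} \<and> even (card u)"
  using C_subset halved_cube_vertices_iff by blast

lemma neighbours_of_C: "x \<in> C \<Longrightarrow> card {y \<in> C. halved_cube_adj x y} = 20 + c"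
  using coloring by (simp add: perfect_coloring_def)

lemma neighbours_of_outside: "x \<in> V24 \<Longrightarrow> x \<notin> C \<Longrightarrow> card {y \<in> C. halved_cube_adj x y} = c"
  using coloring by (simp add: perfect_coloring_def)

text \<open>Double counting the edges between C and its complement fixes the size of C.\<close>

lemma card_C:
  assumes "c \<le> 256"
  shows "card C * 256 = c * 2 ^ 23"
proof -
  have V: "card V24 = 2 ^ 23" by (simp add: card_halved_cube_vertices)
  have "card C * (256 - c) = card (V24 - C) * c"
    using coloring finite_halved_cube_vertices halved_cube_adj_sym
    by (rule perfect_coloring_double_count)
  moreover have "card (V24 - C) = 2 ^ 23 - card C" "card C \<le> 2 ^ 23"
    using C_subset finite_C V card_mono[OF finite_halved_cube_vertices C_subset]
    by (simp_all add: card_Diff_subset)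
  ultimately have "int (card C) * (256 - int c) = (2 ^ 23 - int (card C)) * int c"
    using assms by (metis of_nat_diff of_nat_mult of_nat_numeral of_nat_power)
  then have "int (card C * 256) = int (c * 2 ^ 23)" by (simp add: algebra_simps)
  then show ?thesis by (simp only: of_nat_eq_iff)
qed

definition nbr :: "nat set \<Rightarrow> nat \<Rightarrow> nat set" where
  "nbr x i = {j. j < 24 \<and> j \<noteq> i \<and> flip x {i, j} \<in> C}"

abbreviation deg :: "nat set \<Rightarrow> nat \<Rightarrow> nat" where
  "deg x \<equiv> graph_deg (\<lambda>i j. flip x {i, j} \<in> C) 24"

lemma deg_card_nbr: "deg x i = card (nbr x i)"
  by (simp add: graph_deg_def nbr_def)

lemma local_edge_sym: "(flip x {i, j} \<in> C) = (flip x {j, i} \<in> C)"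
  by (simp add: insert_commute)

lemma degree_sum:
  assumes x: "x \<in> C"
  shows "(\<Sum>i<24. deg x i) = 2 * (20 + c)"
proof -
  let ?T = "{y \<in> C. halved_cube_adj x y}"
  let ?R = "\<lambda>i y. \<exists>j. j < 24 \<and> j \<noteq> i \<and> y = flip x {i, j}"
  have edges: "card {y \<in> ?T. ?R i y} = deg x i" for i
  proof -
    have "{y \<in> ?T. ?R i y} = (\<lambda>j. flip x {i, j}) ` nbr x i"
      by (auto simp: nbr_def halved_cube_adj_pair)
    then show ?thesis by (simp add: card_image inj_on_flip_pair deg_card_nbr)
  qed
  have ends: "card {i \<in> {..<24}. ?R i y} = 2" if y: "y \<in> ?T" for y
  proof -
    obtain a b where ab: "a \<noteq> b" "a < 24" "b < 24" "y = flip x {a, b}"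
      using halved_cube_adj_cases[of x 24 y] x y C_subset by blast
    have "{i \<in> {..<24}. ?R i y} = {a, b}"
      using ab by (auto simp: flip_eq_iff doubleton_eq_iff)
    then show ?thesis using ab(1) by simp
  qed
  have "(\<Sum>i<24. card {y \<in> ?T. ?R i y}) = 2 * card ?T"
    by (rule sum_multicount) (use finite_C ends in auto)
  then show ?thesis using edges neighbours_of_C[OF x] by simp
qed

text \<open>For a non-edge ij, the word flip x {i,j} lies outside C, and its C-neighbours
  include x and the words flip x {i,k}, flip x {j,k} for the neighbours k of i and j.\<close>

lemma nonadjacent_degrees:
  assumes x: "x \<in> C" and ij: "i < 24" "j < 24" "i \<noteq> j" and y: "flip x {i, j} \<notin> C"
  shows "1 + deg x i + deg x j \<le> c"
proof -
  let ?y = "flip x {i, j}"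
  let ?A = "(\<lambda>k. flip x {i, k}) ` nbr x i" and ?B = "(\<lambda>k. flip x {j, k}) ` nbr x j"
  have yV: "?y \<in> V24"
    using x ij by (intro flip_in_halved_cube) (auto simp: C_word)
  have "flip x {i, k} \<noteq> flip x {j, l}" if "k \<in> nbr x i" for k l
    using that y ij(3) by (auto simp: flip_eq_iff doubleton_eq_iff nbr_def)
  then have disj: "x \<notin> ?A \<union> ?B" "?A \<inter> ?B = {}"
    by (auto simp: flip_eq_self)
  have "card (insert x (?A \<union> ?B)) = 1 + deg x i + deg x j"
    using disj by (simp add: card_Un_disjoint card_image inj_on_flip_pair deg_card_nbr nbr_def)
  moreover have "insert x (?A \<union> ?B) \<subseteq> {w \<in> C. halved_cube_adj ?y w}"
  proof -
    have "halved_cube_adj ?y x"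
      using halved_cube_adj_pair[OF ij(3)] halved_cube_adj_sym by blast
    moreover have "halved_cube_adj ?y (flip x {i, k})" if "k \<in> nbr x i" for k
    proof -
      have "k \<noteq> i" "k \<noteq> j" using that y by (auto simp: nbr_def)
      then have "flip x {i, k} = flip ?y {j, k}" using ij(3) by (auto simp: flip_def)
      then show ?thesis using \<open>k \<noteq> j\<close> halved_cube_adj_pair by metis
    qed
    moreover have "halved_cube_adj ?y (flip x {j, k})" if "k \<in> nbr x j" for k
    proof -
      have "k \<noteq> i" "k \<noteq> j" using that y by (auto simp: nbr_def insert_commute)
      then have "flip x {j, k} = flip ?y {i, k}" using ij(3) by (auto simp: flip_def)
      then show ?thesis using \<open>k \<noteq> i\<close> halved_cube_adj_pair by metis
    qed
    ultimately show ?thesis using x by (auto simp: nbr_def)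
  qed
  then have "card (insert x (?A \<union> ?B)) \<le> c"
    using card_mono[of "{w \<in> C. halved_cube_adj ?y w}"] finite_C neighbours_of_outside[OF yV y]
    by fastforce
  ultimately show ?thesis by simp
qed

lemma degree_bound_without_centre:
  assumes x: "x \<in> C" and no_centre: "\<not> (\<exists>v<24. deg x v = 23)"
  obtains M where "\<And>v. v < 24 \<Longrightarrow> deg x v \<le> M" and "1 + M \<le> c"
    and "2 * (20 + c) \<le> M + M * M + (23 - M) * (c - 1 - M)"
proof -
  obtain M where M: "\<And>v. v < 24 \<Longrightarrow> deg x v \<le> M" "1 + M \<le> c"
    "(\<Sum>i<24. deg x i) \<le> M + M * M + (24 - 1 - M) * (c - 1 - M)"
  proof (rule max_degree_bound[of "\<lambda>i j. flip x {i, j} \<in> C" 24 c])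
    show "\<And>i j. (flip x {i, j} \<in> C) = (flip x {j, i} \<in> C)" by (rule local_edge_sym)
    show "\<And>i j. i < 24 \<Longrightarrow> j < 24 \<Longrightarrow> i \<noteq> j \<Longrightarrow> flip x {i, j} \<notin> C \<Longrightarrow>
        1 + deg x i + deg x j \<le> c"
      by (rule nonadjacent_degrees[OF x])
    show "\<And>v. v < 24 \<Longrightarrow> deg x v \<noteq> 24 - 1" using no_centre by simp
  qed auto
  have "2 * (20 + c) \<le> M + M * M + (23 - M) * (c - 1 - M)"
    using M(3) degree_sum[OF x] by (simp add: numeral_3_eq_3 del: One_nat_def)
  then show ?thesis using that M(1,2) by blast
qed

lemma centre_exists:
  assumes x: "x \<in> C" and c: "c \<le> 5"
  shows "\<exists>v<24. deg x v = 23"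
proof (rule ccontr)
  assume "\<not> (\<exists>v<24. deg x v = 23)"
  then obtain M where M: "\<And>v. v < 24 \<Longrightarrow> deg x v \<le> M" "1 + M \<le> c"
    and count: "2 * (20 + c) \<le> M + M * M + (23 - M) * (c - 1 - M)"
    using degree_bound_without_centre[OF x] by blast
  have "2 * (20 + c) \<le> 24 * M"
    using degree_sum[OF x] sum_bounded_above[of "{..<24::nat}" "deg x" M] M(1) by simp
  then have "2 \<le> M" by simp
  then have "M \<in> {2, 3, 4}" "c \<in> {3, 4, 5}" using M(2) c by auto
  then show False using count M(2) by auto
qed

lemma degrees_without_centre_c7:
  assumes x: "x \<in> C" and c: "c = 7" and no_centre: "\<not> (\<exists>v<24. deg x v = 23)"
  shows "\<forall>v<24. deg x v \<le> 4"
proof -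
  obtain M where M: "\<And>v. v < 24 \<Longrightarrow> deg x v \<le> M" "1 + M \<le> c"
    and count: "2 * (20 + c) \<le> M + M * M + (23 - M) * (c - 1 - M)"
    using degree_bound_without_centre[OF x no_centre] by blast
  have "M \<le> 4"
  proof (rule ccontr)
    assume "\<not> M \<le> 4"
    then have "M \<in> {5, 6}" using M(2) c by auto
    then show False using count c by auto
  qed
  then show ?thesis using M(1) by (meson le_trans)
qed

text \<open>A vertex of degree 23 in the local graph forces degree sum at least 46,
  and two of them force degree sum at least 90.\<close>

lemma centre_needs_c_ge_3:
  assumes x: "x \<in> C" and v: "v < 24" "deg x v = 23"
  shows "3 \<le> c"
  using degree_sum_full_vertices[of "\<lambda>i j. flip x {i, j} \<in> C" "{v}" 24] local_edge_sym v
    degree_sum[OF x] by simp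

lemma centre_unique:
  assumes x: "x \<in> C" and c: "c < 25"
    and u: "u < 24" "deg x u = 23" and v: "v < 24" "deg x v = 23"
  shows "u = v"
proof (rule ccontr)
  assume "u \<noteq> v"
  then show False
    using degree_sum_full_vertices[of "\<lambda>i j. flip x {i, j} \<in> C" "{u, v}" 24] local_edge_sym
      u v c degree_sum[OF x] by auto
qed

lemma centre_iff:
  assumes x: "x \<in> C" and v: "v < 24"
  shows "deg x v = 23 \<longleftrightarrow> (\<forall>k<24. flip (flip x {v}) {k} \<in> C)"
proof -
  have flips: "flip (flip x {v}) {k} = (if k = v then x else flip x {v, k})" for k
    by (auto simp: flip_def)
  have "deg x v = 23 \<longleftrightarrow> nbr x v = {..<24} - {v}"
  proof
    assume "deg x v = 23"
    then have "flip x {v, j} \<in> C" if "j < 24" "j \<noteq> v" for j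
      using full_vertex_adj[of "\<lambda>i j. flip x {i, j} \<in> C" 24 v j] v that by simp
    then show "nbr x v = {..<24} - {v}" by (auto simp: nbr_def)
  qed (use v in \<open>simp add: deg_card_nbr\<close>)
  also have "\<dots> \<longleftrightarrow> (\<forall>k<24. k \<noteq> v \<longrightarrow> flip x {v, k} \<in> C)"
    unfolding nbr_def by blast
  also have "\<dots> \<longleftrightarrow> (\<forall>k<24. flip (flip x {v}) {k} \<in> C)"
    using x by (auto simp: flips)
  finally show ?thesis .
qed

text \<open>The (unique, for c < 25) centre of x, and the odd word obtained by flipping it.\<close>

definition centre :: "nat set \<Rightarrow> nat" where
  "centre x = (THE v. v < 24 \<and> deg x v = 23)"

definition core :: "nat set \<Rightarrow> nat set" where
  "core x = flip x {centre x}"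

lemma centre_eq:
  assumes "x \<in> C" "c < 25" "v < 24" "deg x v = 23"
  shows "centre x = v"
  unfolding centre_def using assms centre_unique by (intro the_equality) auto

lemma core_fibre:
  assumes c: "c < 25" and centred: "\<forall>x\<in>C. \<exists>v<24. deg x v = 23" and x: "x \<in> C"
  shows "{y \<in> C. core y = core x} = (\<lambda>k. flip (core x) {k}) ` {..<24}"
proof (intro equalityI subsetI)
  fix y assume y: "y \<in> {y \<in> C. core y = core x}"
  then obtain v where "v < 24" "deg y v = 23" using centred by blast
  then have "core y = flip y {v}" using y c by (simp add: core_def centre_eq)
  then have "core x = flip y {v}" using y by simp
  then have "y = flip (core x) {v}" by simp
  then show "y \<in> (\<lambda>k. flip (core x) {k}) ` {..<24}" using \<open>v < 24\<close> by blast
next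
  fix y assume "y \<in> (\<lambda>k. flip (core x) {k}) ` {..<24}"
  then obtain k where k: "k < 24" "y = flip (core x) {k}" by blast
  obtain v where v: "v < 24" "deg x v = 23" using centred x by blast
  have all: "\<forall>k<24. flip (core x) {k} \<in> C"
    using centre_iff[OF x v(1)] v centre_eq[OF x c v] by (simp add: core_def)
  then have yC: "y \<in> C" using k by blast
  have "deg y k = 23" using centre_iff[OF yC k(1)] all k by simp
  then have "core y = core x" using centre_eq[OF yC c k(1)] k by (simp add: core_def)
  then show "y \<in> {y \<in> C. core y = core x}" using yC by blast
qed

text \<open>Hence the words of C are partitioned into classes of size 24 by their cores.\<close>

lemma card_C_multiple_of_24:
  assumes c: "c < 25" and centred: "\<forall>x\<in>C. \<exists>v<24. deg x v = 23"
  shows "24 dvd card C"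
proof -
  have fibres: "card {x \<in> C. core x = z} = 24" if "z \<in> core ` C" for z
    using that core_fibre[OF c centred] card_image[OF inj_on_flip_single] by auto
  have "(\<Sum>z\<in>core ` C. card {x \<in> C. core x = z}) = 1 * card C"
  proof (rule sum_multicount)
    show "\<forall>x\<in>C. card {z \<in> core ` C. core x = z} = 1"
    proof
      fix x assume "x \<in> C"
      then have "{z \<in> core ` C. core x = z} = {core x}" by auto
      then show "card {z \<in> core ` C. core x = z} = 1" by simp
    qed
  qed (use finite_C in auto)
  then have "card C = 24 * card (core ` C)" using fibres by simp
  then show ?thesis by simp
qed

definition near :: "nat set \<Rightarrow> nat set" where
  "near z = {k. k < 24 \<and> flip z {k} \<in> C}"

definition shell :: "nat set \<Rightarrow> nat set set" where
  "shell z = {u \<in> C. card (flip z u) = 3}"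

definition shell_at :: "nat set \<Rightarrow> nat \<Rightarrow> nat set set" where
  "shell_at z a = {u \<in> C. card (flip z u) = 3 \<and> a \<in> flip z u}"

lemma finite_near: "finite (near z)"
  by (simp add: near_def)

lemma finite_shell_at: "finite (shell_at z a)"
  using finite_C by (simp add: shell_at_def)

lemma card_distance_one:
  assumes "z \<subseteq> {..<24}"
  shows "card {u \<in> C. card (flip z u) = 1} = card (near z)"
proof -
  have "{u \<in> C. card (flip z u) = 1} = (\<lambda>k. flip z {k}) ` near z"
  proof (intro equalityI subsetI)
    fix u assume u: "u \<in> {u \<in> C. card (flip z u) = 1}"
    then obtain k where k: "flip z u = {k}" by (auto simp: card_1_singleton_iff)
    then have "u = flip z {k}" by (metis flip_flip_left)
    moreover have "k < 24" using flip_subset[OF assms, of u] C_word u k by auto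
    ultimately show "u \<in> (\<lambda>k. flip z {k}) ` near z" using u by (auto simp: near_def)
  qed (auto simp: near_def)
  then show ?thesis by (simp add: card_image inj_on_flip_single)
qed

text \<open>An odd word either has all 24 words at distance 1 in C, or at most c of them:
  these are C-neighbours of any flip z {a} outside C.\<close>

lemma card_near_bound:
  assumes z: "z \<subseteq> {..<24}" "odd (card z)"
  shows "card (near z) \<le> c \<or> card (near z) = 24"
proof (cases "\<forall>k<24. flip z {k} \<in> C")
  case True
  then have "near z = {..<24}" by (auto simp: near_def)
  then show ?thesis by simp
next
  case False
  then obtain a where a: "a < 24" "flip z {a} \<notin> C" by blast
  have "halved_cube_adj (flip z {a}) (flip z {k})" if "k \<in> near z" for k
  proof -
    have "a \<noteq> k" using that a by (auto simp: near_def)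
    then show ?thesis by (simp add: halved_cube_adj_iff flip_pair_singles)
  qed
  then have "(\<lambda>k. flip z {k}) ` near z \<subseteq> {u \<in> C. halved_cube_adj (flip z {a}) u}"
    by (auto simp: near_def)
  then have "card ((\<lambda>k. flip z {k}) ` near z) \<le> card {u \<in> C. halved_cube_adj (flip z {a}) u}"
    using finite_C by (intro card_mono) auto
  then have "card (near z) \<le> card {u \<in> C. halved_cube_adj (flip z {a}) u}"
    by (simp add: card_image inj_on_flip_single)
  also have "\<dots> = c" using neighbours_of_outside flip_odd_in_halved_cube[OF z a(1)] a(2) by blast
  finally show ?thesis by simp
qed

lemma finite_flip_C: "z \<subseteq> {..<24} \<Longrightarrow> u \<in> C \<Longrightarrow> flip z u \<subseteq> {..<24} \<and> finite (flip z u)"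
  using flip_subset[of z 24 u] C_word finite_subset[OF _ finite_lessThan] by blast

text \<open>Double counting the pairs (k, u) with u in C adjacent to flip z {k}: each word
  at distance 1 from z contributes 23, each word at distance 3 contributes 3.\<close>

lemma card_shell:
  assumes z: "z \<subseteq> {..<24}" "odd (card z)"
  shows "card (shell z) + card (near z) = 8 * c"
proof -
  let ?g = "\<lambda>u. if card (flip z u) = 1 then 23 else if card (flip z u) = 3 then 3 else 0 :: nat"
  have double_count: "(\<Sum>k<24. card {u \<in> C. halved_cube_adj (flip z {k}) u}) = (\<Sum>u\<in>C. ?g u)"
    by (rule sum_multicount_gen) (use finite_C card_adjacent_single_flips[OF z(1)] C_word in auto)
  have "card {u \<in> C. halved_cube_adj (flip z {k}) u} = c + (if k \<in> near z then 20 else 0)"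
    if "k < 24" for k
    using neighbours_of_C neighbours_of_outside flip_odd_in_halved_cube[OF z that]
    by (cases "k \<in> near z") (auto simp: near_def that)
  moreover have "{..<24} \<inter> {k. k \<in> near z} = near z" by (auto simp: near_def)
  ultimately have "(\<Sum>k<24. card {u \<in> C. halved_cube_adj (flip z {k}) u}) =
      24 * c + 20 * card (near z)"
    by (simp add: sum.distrib sum.If_cases)
  moreover have "(\<Sum>u\<in>C. ?g u) = 23 * card {u \<in> C. card (flip z u) = 1} + 3 * card (shell z)"
  proof -
    have "?g u = (if card (flip z u) = 1 then 23 else 0) + (if card (flip z u) = 3 then 3 else 0)"
      for u by simp
    then show ?thesis using finite_C by (simp add: sum.distrib shell_def flip: sum.inter_filter)
  qed
  ultimately show ?thesis using double_count card_distance_one[OF z(1)] by simp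
qed

lemma neighbours_of_near_word:
  assumes z: "z \<subseteq> {..<24}"
  shows "{u \<in> C. halved_cube_adj (flip z {a}) u} =
           shell_at z a \<union> (\<lambda>k. flip z {k}) ` (near z - {a})"
proof (intro equalityI subsetI)
  fix u assume u: "u \<in> {u \<in> C. halved_cube_adj (flip z {a}) u}"
  then have D: "flip z u \<subseteq> {..<24}" "finite (flip z u)" using finite_flip_C[OF z] by auto
  show "u \<in> shell_at z a \<union> (\<lambda>k. flip z {k}) ` (near z - {a})"
  proof (cases "card (flip z u) = 1")
    case True
    then obtain k where k: "flip z u = {k}" by (rule card_1_singletonE)
    then have "u = flip z {k}" "k \<noteq> a" "k < 24"
      using u D adj_flip_single_iff[OF D(2), of a] by (auto dest: flip_solve)
    then show ?thesis using u by (auto simp: near_def)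
  next
    case False
    then show ?thesis using u adj_flip_single_iff[OF D(2), of a] by (auto simp: shell_at_def)
  qed
next
  fix u assume u: "u \<in> shell_at z a \<union> (\<lambda>k. flip z {k}) ` (near z - {a})"
  then show "u \<in> {u \<in> C. halved_cube_adj (flip z {a}) u}"
  proof
    assume "u \<in> shell_at z a"
    then show ?thesis using adj_flip_single_iff finite_flip_C[OF z] by (auto simp: shell_at_def)
  next
    assume "u \<in> (\<lambda>k. flip z {k}) ` (near z - {a})"
    then obtain k where "k \<in> near z" "k \<noteq> a" "u = flip z {k}" by blast
    then show ?thesis by (auto simp: near_def halved_cube_adj_iff flip_pair_singles)
  qed
qed

lemma card_shell_at:
  assumes z: "z \<subseteq> {..<24}" and a: "a \<in> near z"
  shows "card (shell_at z a) + card (near z) = 21 + c"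
proof -
  have disjoint: "shell_at z a \<inter> (\<lambda>k. flip z {k}) ` (near z - {a}) = {}"
    by (auto simp: shell_at_def)
  have "card (near z - {a}) + 1 = card (near z)"
    using a finite_near by (metis card_Diff1_le card_Suc_Diff1 Suc_eq_plus1)
  moreover have "card {u \<in> C. halved_cube_adj (flip z {a}) u} = 20 + c"
    using neighbours_of_C a by (simp add: near_def)
  moreover have "card (shell_at z a \<union> (\<lambda>k. flip z {k}) ` (near z - {a}))
      = card (shell_at z a) + card (near z - {a})"
    using disjoint finite_shell_at finite_near
    by (simp add: card_Un_disjoint card_image inj_on_flip_single)
  ultimately show ?thesis using neighbours_of_near_word[OF z] by simp
qed

text \<open>Two shells through a and b meet in the words flip z {a,b,m}; these correspond
  to the coordinates m \<noteq> a, b in near (flip z {a,b}).\<close>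

lemma card_shell_at_overlap:
  assumes z: "z \<subseteq> {..<24}" and a: "a \<in> near z" and b: "b \<in> near z" and ab: "a \<noteq> b"
  shows "card (shell_at z a \<inter> shell_at z b) + 2 = card (near (flip z {a, b}))"
proof -
  define W where "W = {m. m < 24 \<and> m \<notin> {a, b} \<and> flip z {a, b, m} \<in> C}"
  have overlap: "shell_at z a \<inter> shell_at z b = (\<lambda>m. flip z {a, b, m}) ` W"
  proof (intro equalityI subsetI)
    fix u assume u: "u \<in> shell_at z a \<inter> shell_at z b"
    then have "card (flip z u) = 3" "a \<in> flip z u" "b \<in> flip z u" by (auto simp: shell_at_def)
    then obtain m where m: "m \<notin> {a, b}" "flip z u = {a, b, m}"
      by (rule card_3_containing_pair[OF _ _ _ ab])
    then have "u = flip z {a, b, m}" "m < 24" using finite_flip_C[OF z] u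
      by (auto dest: flip_solve simp: shell_at_def)
    then show "u \<in> (\<lambda>m. flip z {a, b, m}) ` W" using u m(1) by (auto simp: W_def shell_at_def)
  next
    fix u assume "u \<in> (\<lambda>m. flip z {a, b, m}) ` W"
    then show "u \<in> shell_at z a \<inter> shell_at z b" using ab by (auto simp: W_def shell_at_def)
  qed
  have "inj_on (\<lambda>m. flip z {a, b, m}) W"
    by (rule inj_onI) (auto simp: W_def flip_eq_iff)
  then have "card (shell_at z a \<inter> shell_at z b) = card W" by (simp add: overlap card_image)
  moreover have "flip (flip z {a, b}) {k} = flip z (if k = a then {b} else if k = b then {a} else {a, b, k})"
    for k using ab by (auto simp: flip_def)
  then have "near (flip z {a, b}) = {a, b} \<union> W"
    using a b by (auto simp: near_def W_def)
  then have "card (near (flip z {a, b})) = 2 + card W"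
    using ab by (simp add: card_Un_disjoint W_def)
  ultimately show ?thesis by simp
qed

text \<open>Three shells through a common coordinate a meet in at most one word.\<close>

lemma card_shell_at_pair_overlaps:
  assumes "a \<noteq> b" "a \<noteq> e" "b \<noteq> e"
  shows "card (shell_at z a \<inter> shell_at z b) + card (shell_at z a \<inter> shell_at z e)
           \<le> card (shell_at z a) + 1"
proof -
  let ?P = "shell_at z a \<inter> shell_at z b" and ?Q = "shell_at z a \<inter> shell_at z e"
  have "?P \<inter> ?Q \<subseteq> {flip z {a, b, e}}"
  proof
    fix u assume u: "u \<in> ?P \<inter> ?Q"
    then have "{a, b, e} \<subseteq> flip z u" "card (flip z u) = 3" by (auto simp: shell_at_def)
    moreover have "card {a, b, e} = 3" using assms by simp
    ultimately have "flip z u = {a, b, e}"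
      by (metis card.infinite card_subset_eq zero_neq_numeral)
    then show "u \<in> {flip z {a, b, e}}" by (metis flip_flip_left singletonI)
  qed
  then have "card (?P \<inter> ?Q) \<le> 1" using card_mono[of "{flip z {a, b, e}}"] by fastforce
  moreover have "card (?P \<union> ?Q) \<le> card (shell_at z a)"
    using finite_shell_at by (intro card_mono) auto
  moreover have "card (?P \<union> ?Q) + card (?P \<inter> ?Q) = card ?P + card ?Q"
    using finite_shell_at by (intro card_Un_Int[symmetric]) auto
  ultimately show ?thesis by linarith
qed

text \<open>The shells through distinct coordinates all lie in the shell of z.\<close>

lemma shell_bonferroni:
  "(\<Sum>m\<leftarrow>ms. card (shell_at z m)) \<le> card (shell z) + pairwise_overlap (map (shell_at z) ms)"
proof -
  have "(\<Sum>X\<leftarrow>map (shell_at z) ms. card X)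
      \<le> card (\<Union>(set (map (shell_at z) ms))) + pairwise_overlap (map (shell_at z) ms)"
    using finite_shell_at by (intro bonferroni) auto
  moreover have "card (\<Union>(set (map (shell_at z) ms))) \<le> card (shell z)"
    using finite_C by (intro card_mono) (auto simp: shell_def shell_at_def)
  ultimately show ?thesis by (simp add: comp_def)
qed

lemma odd_flip_of_C:
  assumes x: "x \<in> C" and S: "S \<subseteq> {..<24}" "odd (card S)"
  shows "flip x S \<subseteq> {..<24}" "odd (card (flip x S))"
proof -
  have "x \<subseteq> {..<24}" "even (card x)" using C_word[OF x] by auto
  moreover have "finite x" "finite S" using calculation(1) S(1) finite_subset by blast+
  ultimately show "flip x S \<subseteq> {..<24}" "odd (card (flip x S))"
    using S by (simp_all add: flip_subset even_card_flip)
qed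

lemma near_flip_single:
  assumes x: "x \<in> C" and i: "i < 24"
  shows "near (flip x {i}) = insert i (nbr x i)"
proof -
  have "flip (flip x {i}) {k} = (if k = i then x else flip x {i, k})" for k
    by (auto simp: flip_def)
  then show ?thesis using x i by (auto simp: near_def nbr_def)
qed

lemma card_shell_around:
  assumes x: "x \<in> C" and i: "i < 24"
  shows "card (shell (flip x {i})) + deg x i + 1 = 8 * c"
  using card_shell[OF odd_flip_of_C[OF x, of "{i}"]] near_flip_single[OF x i] i
  by (simp add: deg_card_nbr nbr_def)

lemma card_shell_at_around:
  assumes x: "x \<in> C" and i: "i < 24" and m: "m \<in> insert i (nbr x i)"
  shows "card (shell_at (flip x {i}) m) + deg x i = 20 + c"
  using card_shell_at[OF odd_flip_of_C(1)[OF x, of "{i}"], of m] near_flip_single[OF x i] i m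
  by (simp add: deg_card_nbr nbr_def)

lemma overlap_with_centre_shell:
  assumes x: "x \<in> C" and i: "i < 24" and j: "j \<in> nbr x i"
  shows "card (shell_at (flip x {i}) i \<inter> shell_at (flip x {i}) j) + 1 = deg x j"
proof -
  have j': "j \<noteq> i" "j < 24" using j by (auto simp: nbr_def)
  have "flip (flip x {i}) {i, j} = flip x {j}" using j' by (auto simp: flip_def)
  then have "card (shell_at (flip x {i}) i \<inter> shell_at (flip x {i}) j) + 2 = card (near (flip x {j}))"
    using card_shell_at_overlap[OF odd_flip_of_C(1)[OF x, of "{i}"], of i j] near_flip_single[OF x i] i j j'
    by simp
  then show ?thesis using near_flip_single[OF x j'(2)] by (simp add: deg_card_nbr nbr_def)
qed

lemma overlap_of_neighbour_shells:
  assumes x: "x \<in> C" and i: "i < 24" and j: "j \<in> nbr x i" and k: "k \<in> nbr x i" and jk: "j \<noteq> k"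
  defines "z \<equiv> flip x {i}"
  shows "card (shell_at z j \<inter> shell_at z k) + 2 \<le> c \<or> card (shell_at z j \<inter> shell_at z k) = 22"
proof -
  have jk': "j \<noteq> i" "j < 24" "k \<noteq> i" "k < 24" using j k by (auto simp: nbr_def)
  have S: "{i, j, k} \<subseteq> {..<24}" "odd (card {i, j, k})" using jk jk' i by auto
  have "flip z {j, k} = flip x {i, j, k}" using jk jk' by (auto simp: z_def flip_def)
  then have "card (shell_at z j \<inter> shell_at z k) + 2 = card (near (flip x {i, j, k}))"
    using card_shell_at_overlap[OF odd_flip_of_C(1)[OF x, of "{i}"], of j k] near_flip_single[OF x i]
      i j k jk by (simp add: z_def)
  then show ?thesis using card_near_bound[OF odd_flip_of_C[OF x S]] by auto
qed

text \<open>For c = 7, in a local graph with all degrees at most 4, no vertex has degree 3: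
  the four shells through i and its neighbours would have to overlap too much
  inside the shell of z = flip x {i}.\<close>

lemma no_degree_3:
  assumes c: "c = 7" and x: "x \<in> C" and small: "\<forall>v<24. deg x v \<le> 4"
    and i: "i < 24" and deg_i: "deg x i = 3"
  shows False
proof -
  define z where "z = flip x {i}"
  define B where "B = shell_at z"
  obtain j1 j2 j3 where J: "nbr x i = {j1, j2, j3}" "j1 \<noteq> j2" "j2 \<noteq> j3" "j1 \<noteq> j3"
    using deg_i by (auto simp: deg_card_nbr card_3_iff)
  have jn: "j1 \<in> nbr x i" "j2 \<in> nbr x i" "j3 \<in> nbr x i" using J by auto
  have sizes: "card (B m) = 24" if "m \<in> {i, j1, j2, j3}" for m
    using card_shell_at_around[OF x i, of m] that J deg_i c by (auto simp: B_def z_def)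
  have "card (shell z) = 52"
    using card_shell_around[OF x i] deg_i c by (simp add: z_def)
  then have total: "96 \<le> 52 + pairwise_overlap (map B [i, j1, j2, j3])"
    using shell_bonferroni[of z "[i, j1, j2, j3]"] sizes by (simp add: B_def)
  have centre_overlap: "card (B i \<inter> B j) \<le> 3" if "j \<in> nbr x i" for j
    using overlap_with_centre_shell[OF x i that] small that by (fastforce simp: B_def z_def nbr_def)
  have nbr_overlap: "card (B j \<inter> B k) \<le> 5 \<or> card (B j \<inter> B k) = 22"
    if "j \<in> nbr x i" "k \<in> nbr x i" "j \<noteq> k" for j k
    using overlap_of_neighbour_shells[OF x i that] c by (simp add: B_def z_def)
  have pair_overlaps: "card (B j \<inter> B k) + card (B j \<inter> B l) \<le> 25"
    if "j \<noteq> k" "j \<noteq> l" "k \<noteq> l" "j \<in> {j1, j2, j3}" for j k l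
    using card_shell_at_pair_overlaps[OF that(1-3), of z] sizes that(4) by (auto simp: B_def)
  have "card (B j1 \<inter> B j2) \<le> 5 \<or> card (B j1 \<inter> B j2) = 22"
    "card (B j1 \<inter> B j3) \<le> 5 \<or> card (B j1 \<inter> B j3) = 22"
    "card (B j2 \<inter> B j3) \<le> 5 \<or> card (B j2 \<inter> B j3) = 22"
    using nbr_overlap jn J by auto
  moreover have "card (B j1 \<inter> B j2) + card (B j1 \<inter> B j3) \<le> 25"
    "card (B j1 \<inter> B j2) + card (B j2 \<inter> B j3) \<le> 25"
    "card (B j1 \<inter> B j3) + card (B j2 \<inter> B j3) \<le> 25"
    using pair_overlaps[of j1 j2 j3] pair_overlaps[of j2 j1 j3] pair_overlaps[of j3 j1 j2] J
    by (auto simp: Int_commute)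
  moreover have "card (B i \<inter> B j1) \<le> 3" "card (B i \<inter> B j2) \<le> 3" "card (B i \<inter> B j3) \<le> 3"
    using centre_overlap jn by auto
  ultimately show False using total by simp
qed

text \<open>For c = 7 and all degrees at most 4, a vertex of degree 4 has at most one
  neighbour of degree 4: the two shells of such neighbours meet the shell through i
  in 3 words, which forces small overlaps with all other shells.\<close>

lemma no_two_degree_4_neighbours:
  assumes c: "c = 7" and x: "x \<in> C" and small: "\<forall>v<24. deg x v \<le> 4"
    and i: "i < 24" and deg_i: "deg x i = 4"
    and p: "p \<in> nbr x i" and q: "q \<in> nbr x i" and pq: "p \<noteq> q"
    and deg_p: "deg x p = 4" and deg_q: "deg x q = 4"
  shows False
proof -
  define z where "z = flip x {i}"
  define B where "B = shell_at z"
  have "card (nbr x i - {p, q}) = 2" using deg_i p q pq by (simp add: deg_card_nbr card_Diff_subset)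
  then obtain a b where ab: "nbr x i - {p, q} = {a, b}" "a \<noteq> b" by (auto simp: card_2_iff)
  have J: "nbr x i = {p, q, a, b}" using ab p q by blast
  have distinct: "a \<noteq> p" "a \<noteq> q" "b \<noteq> p" "b \<noteq> q" using ab by blast+
  have jn: "a \<in> nbr x i" "b \<in> nbr x i" using J by auto
  have not_i: "y \<noteq> i" if "y \<in> nbr x i" for y using that by (simp add: nbr_def)
  have sizes: "card (B m) = 23" if "m \<in> insert i (nbr x i)" for m
    using card_shell_at_around[OF x i that] deg_i c by (simp add: B_def z_def)
  have "card (shell z) = 51"
    using card_shell_around[OF x i] deg_i c by (simp add: z_def)
  then have total: "115 \<le> 51 + pairwise_overlap (map B [i, p, q, a, b])"
    using shell_bonferroni[of z "[i, p, q, a, b]"] sizes J by (simp add: B_def)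
  have centre_overlap: "card (B i \<inter> B j) + 1 = deg x j" if "j \<in> nbr x i" for j
    using overlap_with_centre_shell[OF x i that] by (simp add: B_def z_def)
  have small_overlap: "card (B j \<inter> B y) \<le> 5"
    if "j \<in> {p, q}" "y \<in> nbr x i" "y \<noteq> j" for j y
  proof -
    have j: "j \<in> nbr x i" using that(1) p q by blast
    have "card (B j \<inter> B y) + card (B j \<inter> B i) \<le> 24"
      using card_shell_at_pair_overlaps[of j y i z] sizes[of j] not_i that j by (simp add: B_def)
    moreover have "card (B j \<inter> B i) = 3"
      using centre_overlap[OF j] that(1) deg_p deg_q by (auto simp: Int_commute)
    ultimately show ?thesis
      using overlap_of_neighbour_shells[OF x i j that(2)] that(3) c by (auto simp: B_def z_def)
  qed
  have "card (B i \<inter> B p) = 3" "card (B i \<inter> B q) = 3"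
    "card (B i \<inter> B a) \<le> 3" "card (B i \<inter> B b) \<le> 3"
    using centre_overlap p q jn deg_p deg_q small jn by (force simp: nbr_def)+
  moreover have "card (B p \<inter> B q) \<le> 5" "card (B p \<inter> B a) \<le> 5" "card (B p \<inter> B b) \<le> 5"
    "card (B q \<inter> B a) \<le> 5" "card (B q \<inter> B b) \<le> 5"
    using small_overlap q jn distinct pq by auto
  moreover have "card (B a \<inter> B b) \<le> 22"
    using overlap_of_neighbour_shells[OF x i jn ab(2)] c by (auto simp: B_def z_def)
  ultimately show False using total by simp
qed

text \<open>For c = 7 every word of C has a centre: otherwise all degrees are 2 or 4,
  so at least three vertices have degree 4, and they are pairwise adjacent.\<close>

lemma centre_exists_c7:
  assumes c: "c = 7" and x: "x \<in> C"
  shows "\<exists>v<24. deg x v = 23"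
proof (rule ccontr)
  assume no_centre: "\<not> (\<exists>v<24. deg x v = 23)"
  have small: "\<forall>v<24. deg x v \<le> 4"
    using degrees_without_centre_c7[OF x c no_centre] .
  define H where "H = {v. v < 24 \<and> deg x v = 4}"
  have le: "deg x v \<le> 2 + (if v \<in> H then 2 else 0)" if "v < 24" for v
    using small no_degree_3[OF c x small that] that by (force simp: H_def)
  have "2 * (20 + c) \<le> (\<Sum>v<24. 2 + (if v \<in> H then 2 else 0 :: nat))"
    using degree_sum[OF x] sum_mono[of "{..<24}" "deg x"] le by (metis lessThan_iff)
  also have "\<dots> = 48 + 2 * card H"
  proof -
    have "{..<24} \<inter> {v. v \<in> H} = H" by (auto simp: H_def)
    then show ?thesis by (simp only: sum.distrib) (simp add: sum.If_cases)
  qed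
  finally have "3 \<le> card H" using c by simp
  then obtain T where "T \<subseteq> H" "card T = 3" by (rule obtain_subset_with_card_n)
  then obtain i p q where T: "T = {i, p, q}" "i \<noteq> p" "p \<noteq> q" "i \<noteq> q"
    by (auto simp: card_3_iff)
  then have deg4: "i < 24" "deg x i = 4" "p < 24" "deg x p = 4" "q < 24" "deg x q = 4"
    using \<open>T \<subseteq> H\<close> by (auto simp: H_def)
  have "y \<in> nbr x i" if "y < 24" "deg x y = 4" "y \<noteq> i" for y
    using nonadjacent_degrees[OF x deg4(1) that(1)] that deg4(2) c by (fastforce simp: nbr_def)
  then show False
    using no_two_degree_4_neighbours[OF c x small deg4(1,2)] deg4 T by blast
qed

lemma three_dvd_c:
  assumes "c \<le> 256" and "24 dvd card C"
  shows "3 dvd c"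
proof -
  obtain k where "card C = 24 * k" using assms(2) by blast
  then have "6144 * k = 8388608 * c" using card_C[OF assms(1)] by simp
  then have "3 * k = 3 * (1365 * c) + c" by linarith
  then have "3 dvd 3 * (1365 * c) + c" by (metis dvd_triv_left)
  then show ?thesis using dvd_add_right_iff[of 3 "3 * (1365 * c)" c] by simp
qed

end

theorem theorem2:
  fixes c :: nat
  assumes "c \<in> {1, 2, 4, 5, 7}"
  shows "\<not> (\<exists>C. perfect_coloring (halved_cube_vertices 24) halved_cube_adj C
                  (20 + c) (256 - c) c (276 - c))"
proof
  assume "\<exists>C. perfect_coloring (halved_cube_vertices 24) halved_cube_adj C
                  (20 + c) (256 - c) c (276 - c)"
  then obtain C where "perfect_coloring V24 halved_cube_adj C (20 + c) (256 - c) c (276 - c)"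
    by blast
  then interpret coloring24 C c by unfold_locales
  have c: "c \<le> 5 \<or> c = 7" "c < 25" "c \<le> 256" using assms by auto
  then have centred: "\<forall>x\<in>C. \<exists>v<24. deg x v = 23"
    using centre_exists centre_exists_c7 by blast
  then have "3 \<le> c" using C_nonempty centre_needs_c_ge_3 by blast
  have "24 dvd card C" using card_C_multiple_of_24[OF c(2) centred] .
  then have "3 dvd c" using three_dvd_c[OF c(3)] by blast
  then show False using \<open>3 \<le> c\<close> assms by auto
qed

end
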